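(* Let $X\ge e^{120}$, $U=\log X$ and $\widetilde W_X=[X,(1+\tfrac{2}{U})X]$. Fix any trajectory $(y_j)_{j\ge0}$ of the map $\mathcal{M}$, and let $N$ be the number of indices $j$ such that $y_j\in\widetilde W_X$ and $y_j$ is composite. Then $N\le 4$.
   Context: Let $\pi(m)$ be the number of primes $\le m$. The integer map $\mathcal{M}$ is defined by: for composite $m$, $\mathcal{M}(m)=m+\pi(m)$ (forward step of length $\pi(m)$); for a prime $p\ge 3$, $\mathcal{M}(p)=p^-$, the largest prime less than $p$ (i.e. the prime steps backward by its preceding prime gap). A trajectory is a sequence with $y_{j+1}=\mathcal{M}(y_j)$ for all $j\ge0$. *)

theory Defs
  imports "HOL-Computational_Algebra.Primes" Complex_Main
begin

definition prime_pi :: "nat \<Rightarrow> nat" where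
  "prime_pi m = card {p. prime p \<and> p \<le> m}"

definition composite :: "nat \<Rightarrow> bool" where
  "composite m \<longleftrightarrow> m > 1 \<and> \<not> prime m"

text \<open>Largest prime strictly less than p (meaningful for p >= 3).\<close>
definition prev_prime :: "nat \<Rightarrow> nat" where
  "prev_prime p = (GREATEST q. prime q \<and> q < p)"

definition M_step :: "nat \<Rightarrow> nat \<Rightarrow> bool" where
  "M_step y y' \<longleftrightarrow>
     (composite y \<and> y' = y + prime_pi y) \<or>
     (prime y \<and> y \<ge> 3 \<and> y' = prev_prime y)"

definition trajectory :: "(nat \<Rightarrow> nat) \<Rightarrow> bool" where
  "trajectory y \<longleftrightarrow> (\<forall>j. M_step (y j) (y (Suc j)))"

end

theory Submission
  imports Defs
begin

text \<open>A prime steps to a smaller prime and the map is undefined at 2, so a trajectory never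
  meets a prime: every point is composite, and each step advances by \<open>\<pi>\<close> of the current
  point. Chebyshev's bound \<open>\<pi>(x) log x \<ge> x log 2 - O(log x)\<close>, obtained from
  \<open>4^n/(2n) \<le> C(2n,n) \<le> (2n)^\<pi>(2n)\<close>, gives \<open>\<pi>(X) > X/(2 log X)\<close>. Hence four steps
  starting in \<open>[X, (1 + 2/log X) X]\<close> leave it, so at most four indices land there.\<close>

lemma multiplicity_fact:
  fixes p :: nat
  assumes p: "prime p" and "n < p ^ K"
  shows "multiplicity p (fact n :: nat) = (\<Sum>i\<in>{1..K}. n div p ^ i)"
  using \<open>n < p ^ K\<close>
proof (induction n)
  case 0
  then show ?case by simp
next
  case (Suc n)
  have p1: "p > 1" using p prime_gt_1_nat by blast
  define m where "m = multiplicity p (Suc n)"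
  have "p ^ m \<le> Suc n" unfolding m_def by (intro dvd_imp_le multiplicity_dvd) simp
  hence "p ^ m < p ^ K" using Suc.prems by linarith
  hence "m < K" using p1 power_less_imp_less_exp by blast
  have divisors: "{i\<in>{1..K}. p ^ i dvd Suc n} = {1..m}"
  proof safe
    fix i assume "i \<in> {1..K}" "p ^ i dvd Suc n"
    moreover have "i \<le> m" unfolding m_def
      by (rule multiplicity_geI) (use p1 \<open>p ^ i dvd Suc n\<close> in auto)
    ultimately show "i \<in> {1..m}" by auto
  next
    fix i assume "i \<in> {1..m}"
    then show "i \<in> {1..K}" using \<open>m < K\<close> by auto
    show "p ^ i dvd Suc n" using \<open>i \<in> {1..m}\<close> unfolding m_def
      by (intro multiplicity_dvd') auto
  qed
  have "(\<Sum>i\<in>{1..K}. Suc n div p ^ i) =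
        (\<Sum>i\<in>{1..K}. n div p ^ i + (if p ^ i dvd Suc n then 1 else 0))"
    by (intro sum.cong refl) (auto simp: div_Suc dvd_eq_mod_eq_0)
  also have "\<dots> = (\<Sum>i\<in>{1..K}. n div p ^ i) + card {i\<in>{1..K}. p ^ i dvd Suc n}"
    by (simp add: sum.distrib sum.If_cases Int_def)
  also have "\<dots> = multiplicity p (fact n :: nat) + m"
    using Suc by (subst divisors) simp
  also have "\<dots> = multiplicity p (Suc n * fact n :: nat)"
    unfolding m_def by (subst prime_elem_multiplicity_mult_distrib) (use p in auto)
  finally show ?case by (simp add: fact_Suc)
qed

lemma double_div_le: "2 * n div d \<le> 2 * (n div d) + (1::nat)"
proof (cases "d = 0")
  case False
  have "2 * n div d = 2 * (n div d) + (n mod d + n mod d) div d"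
    using div_add1_eq[of n n d] by (simp add: mult_2)
  moreover have "n mod d < d" using False by simp
  hence "n mod d + n mod d < 2 * d" by linarith
  hence "(n mod d + n mod d) div d < 2" by (rule less_mult_imp_div_less)
  ultimately show ?thesis by linarith
qed simp

lemma prime_power_multiplicity_central_binomial_le:
  fixes p n :: nat
  assumes p: "prime p" and "n > 0"
  shows "p ^ multiplicity p (2 * n choose n) \<le> 2 * n"
proof (rule ccontr)
  define v where "v = multiplicity p (2 * n choose n)"
  define K where "K = 2 * n"
  assume "\<not> p ^ multiplicity p (2 * n choose n) \<le> 2 * n"
  hence v_large: "2 * n < p ^ v" unfolding v_def by simp
  have p1: "p > 1" using p prime_gt_1_nat by blast
  have "v \<ge> 1" using v_large \<open>n > 0\<close> by (cases v) auto
  have "2 * n < 2 ^ K" unfolding K_def by (rule less_exp)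
  also have "\<dots> \<le> p ^ K" using p1 by (intro power_mono) auto
  finally have K: "2 * n < p ^ K" .
  have "fact n * fact n * (2 * n choose n) = (fact (2 * n) :: nat)"
    using binomial_fact_lemma[of n "2 * n"] by simp
  hence "multiplicity p (fact (2 * n) :: nat) = 2 * multiplicity p (fact n :: nat) + v"
    unfolding v_def using p by (auto simp flip: \<open>_ = fact (2 * n)\<close>
        simp: prime_elem_multiplicity_mult_distrib)
  hence legendre: "(\<Sum>i\<in>{1..K}. 2 * n div p ^ i) = 2 * (\<Sum>i\<in>{1..K}. n div p ^ i) + v"
    using multiplicity_fact[OF p K] multiplicity_fact[OF p, of n K] K by simp
  \<comment> \<open>\<open>\<lfloor>2n/p^i\<rfloor> - 2\<lfloor>n/p^i\<rfloor>\<close> is at most 1, and 0 once \<open>p^i > 2n\<close>\<close>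
  have "(\<Sum>i\<in>{1..K}. 2 * n div p ^ i)
      \<le> (\<Sum>i\<in>{1..K}. 2 * (n div p ^ i) + (if i < v then 1 else 0))"
  proof (intro sum_mono)
    fix i
    show "2 * n div p ^ i \<le> 2 * (n div p ^ i) + (if i < v then 1 else 0)"
    proof (cases "i < v")
      case False
      hence "p ^ v \<le> p ^ i" using p1 by (intro power_increasing) auto
      then show ?thesis using v_large by simp
    qed (use double_div_le[of n "p ^ i"] in simp)
  qed
  also have "\<dots> = 2 * (\<Sum>i\<in>{1..K}. n div p ^ i) + card {i\<in>{1..K}. i < v}"
    by (simp add: sum.distrib sum.If_cases Int_def sum_distrib_left)
  also have "card {i\<in>{1..K}. i < v} \<le> card {1..<v}"
    by (intro card_mono) auto
  finally show False using legendre \<open>v \<ge> 1\<close> by simp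
qed

lemma prime_pi_mono: "a \<le> b \<Longrightarrow> prime_pi a \<le> prime_pi b"
  unfolding prime_pi_def by (intro card_mono) (auto intro: finite_subset[of _ "{..b}"])

lemma central_binomial_le_power_prime_pi:
  fixes n :: nat
  assumes "n > 0"
  shows "(2 * n choose n) \<le> (2 * n) ^ prime_pi (2 * n)"
proof -
  define C where "C = (2 * n choose n)"
  have factors_le: "p ^ multiplicity p C \<le> 2 * n" if "p \<in> prime_factors C" for p
    unfolding C_def using that \<open>n > 0\<close>
    by (auto intro: prime_power_multiplicity_central_binomial_le)
  have "prime_factors C \<subseteq> {p. prime p \<and> p \<le> 2 * n}"
  proof safe
    fix p assume p: "p \<in> prime_factors C"
    hence "p ^ 1 \<le> p ^ multiplicity p C"
      using prime_gt_1_nat[of p] by (intro power_increasing) (auto simp: prime_factors_multiplicity)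
    with factors_le[OF p] show "p \<le> 2 * n" by simp
  qed (auto)
  hence card: "card (prime_factors C) \<le> prime_pi (2 * n)"
    unfolding prime_pi_def by (intro card_mono) (auto intro: finite_subset[of _ "{..2 * n}"])
  have "C = (\<Prod>p \<in> prime_factors C. p ^ multiplicity p C)"
    using prod_prime_factors[of C] by (simp add: C_def)
  also have "\<dots> \<le> (\<Prod>p \<in> prime_factors C. 2 * n)"
    by (intro prod_mono) (simp add: factors_le)
  also have "\<dots> = (2 * n) ^ card (prime_factors C)" by simp
  also have "\<dots> \<le> (2 * n) ^ prime_pi (2 * n)"
    using \<open>n > 0\<close> card by (intro power_increasing) auto
  finally show ?thesis unfolding C_def .
qed

lemma prime_pi_lower_bound:
  fixes x :: nat
  assumes "x \<ge> 2"
  shows "(real x - 1) * ln 2 - ln x \<le> real (prime_pi x) * ln x"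
proof -
  define n where "n = x div 2"
  have "n > 0" "2 * n \<le> x" "real x - 1 \<le> 2 * real n"
    using assms by (auto simp: n_def)
  have "(4::real) ^ n = 2 ^ (2 * n)" by (simp add: power_mult)
  hence "2 * real n * ln 2 - ln (2 * n) = ln (4 ^ n / (2 * real n))"
    using \<open>n > 0\<close> by (simp add: ln_div ln_realpow)
  also have "\<dots> \<le> ln (real (2 * n choose n))"
    using central_binomial_lower_bound[OF \<open>n > 0\<close>] \<open>n > 0\<close> by simp
  also have "\<dots> \<le> ln (real ((2 * n) ^ prime_pi (2 * n)))"
    by (intro ln_mono of_nat_mono central_binomial_le_power_prime_pi \<open>n > 0\<close>) simp
  also have "\<dots> = real (prime_pi (2 * n)) * ln (2 * n)"
    by (simp only: of_nat_power ln_realpow)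
  finally have "2 * real n * ln 2 - ln (2 * n) \<le> real (prime_pi (2 * n)) * ln (2 * n)" .
  moreover have "real (prime_pi (2 * n)) * ln (2 * n) \<le> real (prime_pi x) * ln x"
    using \<open>n > 0\<close> \<open>2 * n \<le> x\<close> by (intro mult_mono of_nat_mono prime_pi_mono) auto
  moreover have "ln x \<ge> ln (2 * n)"
    using \<open>n > 0\<close> \<open>2 * n \<le> x\<close> by simp
  moreover have "(real x - 1) * ln 2 \<le> 2 * real n * ln 2"
    using \<open>real x - 1 \<le> 2 * real n\<close> by (simp add: mult_right_mono)
  ultimately show ?thesis by linarith
qed

lemma ln_2_ge: "5 / 8 \<le> ln (2::real)"
proof -
  have "1 \<le> ln (3::real)"
    using exp_le by (subst ln_ge_iff) auto
  moreover have "ln (3 / 4 :: real) \<le> 3 / 4 - 1"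
    by (rule ln_le_minus_one) simp
  moreover have "ln (3 / 4 :: real) = ln 3 - 2 * ln 2"
    using ln_realpow[of 2 2] by (simp add: ln_div)
  ultimately show ?thesis by linarith
qed

lemma prime_pi_gt_div_ln:
  fixes X :: real and m :: nat
  assumes "X \<ge> 3000" and "X \<le> real m"
  shows "X / (2 * ln X) < real (prime_pi m)"
proof -
  define N where "N = nat \<lfloor>X\<rfloor>"
  have N: "real N \<le> X" "X - 1 < real N" "N \<ge> 2"
    using assms(1) by (auto simp: N_def) linarith+
  have "0 < ln X" using assms(1) by simp
  have "ln (X / 16) \<le> X / 16 - 1" "ln (16::real) \<le> 16 - 1"
    using assms(1) by (intro ln_le_minus_one; simp)+
  hence ln_X: "ln X \<le> X / 16 + 14" using assms(1) by (simp add: ln_div)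
  have "(X - 2) * (5 / 8) \<le> (real N - 1) * ln 2"
    using N ln_2_ge assms(1) by (intro mult_mono) auto
  also have "\<dots> \<le> real (prime_pi N) * ln N + ln N"
    using prime_pi_lower_bound[OF \<open>N \<ge> 2\<close>] by simp
  also have "\<dots> \<le> real (prime_pi m) * ln X + ln X"
    using N \<open>X \<le> real m\<close> \<open>0 < ln X\<close>
    by (intro add_mono mult_mono of_nat_mono prime_pi_mono) auto
  finally have "X / 2 < real (prime_pi m) * ln X"
    using ln_X assms(1) by (simp add: algebra_simps)
  with \<open>0 < ln X\<close> show ?thesis by (subst pos_divide_less_eq) simp_all
qed

lemma prime_prev_prime_less:
  assumes "prime q" and "q \<ge> 3"
  shows "prime (prev_prime q)" and "prev_prime q < q"
proof -
  have "prime (prev_prime q) \<and> prev_prime q < q"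
    unfolding prev_prime_def by (rule GreatestI_nat[of _ 2 q]) (use assms in auto)
  thus "prime (prev_prime q)" "prev_prime q < q" by auto
qed

lemma trajectory_not_prime:
  assumes "trajectory y"
  shows "\<not> prime (y j)"
proof
  assume "prime (y j)"
  have "prime (y (j + k)) \<and> y (j + k) + k \<le> y j" for k
  proof (induction k)
    case 0
    with \<open>prime (y j)\<close> show ?case by simp
  next
    case (Suc k)
    have "M_step (y (j + k)) (y (Suc (j + k)))"
      using assms unfolding trajectory_def by blast
    moreover have "\<not> composite (y (j + k))"
      using Suc unfolding composite_def by simp
    ultimately have "prime (y (j + k))" "y (j + k) \<ge> 3" "y (Suc (j + k)) = prev_prime (y (j + k))"
      unfolding M_step_def by blast+
    hence "prime (y (Suc (j + k)))" "y (Suc (j + k)) < y (j + k)"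
      using prime_prev_prime_less by simp_all
    with Suc show ?case by simp
  qed
  from this[of "Suc (y j)"] show False by simp
qed

lemma trajectory_Suc:
  assumes "trajectory y"
  shows "y (Suc j) = y j + prime_pi (y j)"
  using assms trajectory_not_prime[OF assms, of j] unfolding trajectory_def M_step_def by blast

lemma trajectory_advance:
  assumes "trajectory y"
  shows "y j + k * prime_pi (y j) \<le> y (j + k)"
proof (induction k)
  case (Suc k)
  hence "prime_pi (y j) \<le> prime_pi (y (j + k))" by (intro prime_pi_mono) simp
  with Suc show ?case using trajectory_Suc[OF assms, of "j + k"] by simp
qed simp

lemma finite_card_le_if_spread_less:
  fixes S :: "nat set"
  assumes "\<And>i j. i \<in> S \<Longrightarrow> j \<in> S \<Longrightarrow> j < i + k"
  shows "finite S \<and> card S \<le> k"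
proof (cases "S = {}")
  case False
  then obtain a where "a \<in> S" by blast
  hence "finite S" using assms by (intro finite_subset[of S "{..<a + k}"]) auto
  moreover have "Min S \<in> S" using \<open>finite S\<close> False by simp
  ultimately have "S \<subseteq> {Min S..<Min S + k}" using assms[OF \<open>Min S \<in> S\<close>] by auto
  hence "card S \<le> k" using card_mono[of "{Min S..<Min S + k}" S] by simp
  with \<open>finite S\<close> show ?thesis ..
qed simp

lemma trajectory_window_indices_close:
  assumes "trajectory y" and "X \<ge> 3000"
    and "X \<le> real (y i)" and "real (y j) \<le> (1 + 2 / ln X) * X"
  shows "j < i + 4"
proof (rule ccontr)
  assume "\<not> j < i + 4"
  hence "y i + 4 * prime_pi (y i) \<le> y i + (j - i) * prime_pi (y i)"
    by (intro add_left_mono mult_right_mono) auto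
  also have "\<dots> \<le> y j"
    using trajectory_advance[OF assms(1), of i "j - i"] \<open>\<not> j < i + 4\<close> by simp
  finally have "y i + 4 * prime_pi (y i) \<le> y j" .
  moreover have "2 * X / ln X < 4 * real (prime_pi (y i))"
    using prime_pi_gt_div_ln[OF assms(2,3)] by simp
  ultimately have "X + 2 * X / ln X < real (y j)"
    using assms(3) by linarith
  with assms(4) show False by (simp add: algebra_simps)
qed

theorem lemma3p3:
  fixes X :: real and y :: "nat \<Rightarrow> nat"
  assumes "X \<ge> exp 120"
    and "trajectory y"
  shows "let U = ln X;
             W = {X .. (1 + 2 / U) * X};
             S = {j. real (y j) \<in> W \<and> composite (y j)}
         in finite S \<and> card S \<le> 4"
proof -
  have "(3000::real) \<le> 1 + 120 + 120\<^sup>2 / 2" by simp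
  also have "\<dots> \<le> exp 120" by (rule exp_lower_Taylor_quadratic) simp
  finally have "3000 \<le> X" using assms(1) by linarith
  have "j < i + 4"
    if "real (y i) \<in> {X..(1 + 2 / ln X) * X}" and "real (y j) \<in> {X..(1 + 2 / ln X) * X}" for i j
    using trajectory_window_indices_close[OF assms(2) \<open>3000 \<le> X\<close>, of i j] that by simp
  then show ?thesis unfolding Let_def by (intro finite_card_le_if_spread_less) blast
qed

end
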